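(* Let $s\geq 2$ be an even integer, let $m\geq 3$ be an integer, and let $n$ be an integer with $n\geq (2sm-1)\left(\frac{sm}{2}-1\right)+1$. Then $$R(P_n,J_{s,m})=n+\frac{sm}{2}-1.$$
   Context: All graphs are finite and simple. For graphs $G$ and $H$, the Ramsey number $R(G,H)$ is the least natural number $N$ such that for every graph $F$ on $N$ vertices, either $F$ contains $G$ as a subgraph or the complement $\overline{F}$ contains $H$ as a subgraph. $P_n$ denotes the path on $n$ vertices. For integers $s,m\geq 2$, the generalized Jahangir graph $J_{s,m}$ is the graph on $sm+1$ vertices consisting of a cycle $C_{sm}=v_1v_2\cdots v_{sm}v_1$ together with one additional vertex adjacent to exactly the $m$ cycle vertices $v_1, v_{s+1}, v_{2s+1},\ldots,v_{(m-1)s+1}$ (i.e., $m$ vertices of the cycle at distance $s$ from each other along the cycle). *)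

theory Defs
  imports Main
begin

definition simple_graph :: "nat \<Rightarrow> (nat \<Rightarrow> nat \<Rightarrow> bool) \<Rightarrow> bool" where
  "simple_graph k E \<longleftrightarrow>
     (\<forall>u<k. \<forall>v<k. E u v \<longrightarrow> E v u) \<and> (\<forall>u<k. \<not> E u u)"

definition contains_subgraph ::
  "nat \<Rightarrow> (nat \<Rightarrow> nat \<Rightarrow> bool) \<Rightarrow> nat \<Rightarrow> (nat \<Rightarrow> nat \<Rightarrow> bool) \<Rightarrow> bool" where
  "contains_subgraph N EF k EG \<longleftrightarrow>
     (\<exists>f. inj_on f {0..<k} \<and> f ` {0..<k} \<subseteq> {0..<N} \<and>
          (\<forall>u<k. \<forall>v<k. EG u v \<longrightarrow> EF (f u) (f v)))"

definition complement_edges :: "(nat \<Rightarrow> nat \<Rightarrow> bool) \<Rightarrow> nat \<Rightarrow> nat \<Rightarrow> bool" where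
  "complement_edges E u v \<longleftrightarrow> u \<noteq> v \<and> \<not> E u v"

definition ramsey_number ::
  "nat \<Rightarrow> (nat \<Rightarrow> nat \<Rightarrow> bool) \<Rightarrow> nat \<Rightarrow> (nat \<Rightarrow> nat \<Rightarrow> bool) \<Rightarrow> nat" where
  "ramsey_number kG EG kH EH =
     (LEAST N. \<forall>E. simple_graph N E \<longrightarrow>
        contains_subgraph N E kG EG \<or> contains_subgraph N (complement_edges E) kH EH)"

definition path_edges :: "nat \<Rightarrow> nat \<Rightarrow> bool" where
  "path_edges u v \<longleftrightarrow> u + 1 = v \<or> v + 1 = u"

text \<open>Generalized Jahangir graph J_{s,m}: cycle on 0..sm-1 (vertex i corresponds to v_{i+1}),
  hub vertex sm adjacent to the cycle vertices i with s dvd i (i.e. v_1, v_{s+1}, ...).\<close>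
definition jahangir_edges :: "nat \<Rightarrow> nat \<Rightarrow> nat \<Rightarrow> nat \<Rightarrow> bool" where
  "jahangir_edges s m u v \<longleftrightarrow>
     (u < s*m \<and> v < s*m \<and> (v = (u + 1) mod (s*m) \<or> u = (v + 1) mod (s*m))) \<or>
     (u = s*m \<and> v < s*m \<and> s dvd v) \<or>
     (v = s*m \<and> u < s*m \<and> s dvd u)"

end

theory Submission
  imports Defs
begin

text \<open>Let k = sm/2. As s is even, J_{s,m} is bipartite with colour classes of sizes k (the even
  cycle vertices) and k + 1 (the odd cycle vertices and the hub), so the complement of F contains
  J_{s,m} as soon as F has disjoint vertex sets of sizes k and k + 1 with no edges between them.

  Lower bound: two disjoint cliques on n - 1 and k - 1 vertices contain no P_n, and their
  complement is complete bipartite with a side of fewer than k vertices, while the 2k-cycle of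
  J_{s,m} must alternate between the sides.

  Upper bound: let F have n + k - 1 vertices and no P_n, and take a longest path. If it has fewer
  than n - k - 1 vertices, stop a depth-first search once k vertices are finished: the stack is a
  path, so at least k + 1 vertices are still unvisited, and none is adjacent to a finished one.
  Otherwise at least k vertices lie off the path. If one of them has 2k neighbours on the path,
  the successors of these neighbours together with it form an independent set, by maximality of
  the path. If not, k of them see at most k(2k - 1) path vertices together, and the bound on n
  leaves k + 1 path vertices unseen.\<close>

definition path_in :: "nat \<Rightarrow> (nat \<Rightarrow> nat \<Rightarrow> bool) \<Rightarrow> (nat \<Rightarrow> nat) \<Rightarrow> nat \<Rightarrow> bool" where
  "path_in N E p L \<longleftrightarrow> inj_on p {..<L} \<and> p ` {..<L} \<subseteq> {..<N} \<and>
     (\<forall>i. Suc i < L \<longrightarrow> E (p i) (p (Suc i)))"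

definition longest_path :: "nat \<Rightarrow> (nat \<Rightarrow> nat \<Rightarrow> bool) \<Rightarrow> (nat \<Rightarrow> nat) \<Rightarrow> nat \<Rightarrow> bool" where
  "longest_path N E p L \<longleftrightarrow> path_in N E p L \<and> (\<forall>q L'. path_in N E q L' \<longrightarrow> L' \<le> L)"

definition independent_set :: "(nat \<Rightarrow> nat \<Rightarrow> bool) \<Rightarrow> nat set \<Rightarrow> bool" where
  "independent_set E I \<longleftrightarrow> (\<forall>x\<in>I. \<forall>y\<in>I. x \<noteq> y \<longrightarrow> \<not> E x y)"

definition anticomplete :: "(nat \<Rightarrow> nat \<Rightarrow> bool) \<Rightarrow> nat set \<Rightarrow> nat set \<Rightarrow> bool" where
  "anticomplete E A B \<longleftrightarrow> (\<forall>a\<in>A. \<forall>b\<in>B. \<not> E a b \<and> \<not> E b a)"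

definition contains_anticomplete_pair :: "nat \<Rightarrow> (nat \<Rightarrow> nat \<Rightarrow> bool) \<Rightarrow> nat \<Rightarrow> nat \<Rightarrow> bool" where
  "contains_anticomplete_pair N E a b \<longleftrightarrow>
     (\<exists>A B. A \<subseteq> {..<N} \<and> B \<subseteq> {..<N} \<and> A \<inter> B = {} \<and> a \<le> card A \<and> b \<le> card B \<and>
            anticomplete E A B)"

lemma simple_graph_sym: "simple_graph N E \<Longrightarrow> u < N \<Longrightarrow> v < N \<Longrightarrow> E u v \<Longrightarrow> E v u"
  unfolding simple_graph_def by blast

lemma path_in_less: "path_in N E p L \<Longrightarrow> i < L \<Longrightarrow> p i < N"
  unfolding path_in_def by blast

lemma path_in_prefix: "path_in N E p L \<Longrightarrow> L' \<le> L \<Longrightarrow> path_in N E p L'"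
  unfolding path_in_def by (auto intro: inj_on_subset) (meson image_subset_iff lessThan_iff less_le_trans)

lemma path_in_length_le: "path_in N E p L \<Longrightarrow> L \<le> N"
  unfolding path_in_def using card_inj_on_le[of p "{..<L}" "{..<N}"] by simp

lemma path_in_contains_path:
  assumes sg: "simple_graph N E" and p: "path_in N E p L" and nL: "n \<le> L"
  shows "contains_subgraph N E n path_edges"
  unfolding contains_subgraph_def
proof (intro exI conjI allI impI)
  show "inj_on p {0..<n}"
    using p nL unfolding path_in_def by (auto intro: inj_on_subset)
  show "p ` {0..<n} \<subseteq> {0..<N}"
    using path_in_less[OF p] nL by auto
  fix u v assume u: "u < n" and v: "v < n" and "path_edges u v"
  then consider "v = Suc u" | "u = Suc v" unfolding path_edges_def by auto
  then show "E (p u) (p v)"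
  proof cases
    case 1 then show ?thesis using p nL v unfolding path_in_def by auto
  next
    case 2
    then have "E (p v) (p u)" using p nL u unfolding path_in_def by auto
    then show ?thesis using simple_graph_sym[OF sg] path_in_less[OF p] nL u v by auto
  qed
qed

text \<open>The sequence p 0, ..., p i, w, p j, p (j - 1), ..., p (Suc i), p (Suc j), ...: the vertex w
  is inserted after p i and the segment from p (Suc i) to p j is reversed (for j = i nothing
  is reversed).\<close>
definition detour :: "(nat \<Rightarrow> nat) \<Rightarrow> nat \<Rightarrow> nat \<Rightarrow> nat \<Rightarrow> nat \<Rightarrow> nat" where
  "detour p w i j t =
     (if t \<le> i then p t else if t = Suc i then w else if t \<le> Suc j then p (j + i + 2 - t) else p (t - 1))"

lemma detour_image:
  assumes ij: "i \<le> j" "j < L"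
  shows "detour p w i j ` {..<Suc L} = insert w (p ` {..<L})"
proof
  show "detour p w i j ` {..<Suc L} \<subseteq> insert w (p ` {..<L})"
  proof (intro image_subsetI)
    fix t assume "t \<in> {..<Suc L}"
    then have t: "t < Suc L" by simp
    consider "t \<le> i" | "t = Suc i" | "Suc i < t" "t \<le> Suc j" | "Suc j < t" by linarith
    then show "detour p w i j t \<in> insert w (p ` {..<L})"
    proof cases
      case 1 then show ?thesis using ij unfolding detour_def by simp
    next
      case 2 then show ?thesis unfolding detour_def by simp
    next
      case 3
      then have "j + i + 2 - t < L" using ij by linarith
      then show ?thesis using 3 unfolding detour_def by simp
    next
      case 4
      then have "t - 1 < L" using t by linarith
      then show ?thesis using 4 ij unfolding detour_def by simp
    qed
  qed
  show "insert w (p ` {..<L}) \<subseteq> detour p w i j ` {..<Suc L}"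
  proof (intro subsetI)
    fix y assume "y \<in> insert w (p ` {..<L})"
    then consider "y = w" | x where "x < L" "y = p x" by blast
    then show "y \<in> detour p w i j ` {..<Suc L}"
    proof cases
      case 1 then show ?thesis using ij by (intro image_eqI[where x="Suc i"]) (auto simp: detour_def)
    next
      case (2 x)
      note x = this
      consider "x \<le> i" | "i < x" "x \<le> j" | "j < x" by linarith
      then show ?thesis
      proof cases
        case 1 then show ?thesis using x by (intro image_eqI[where x=x]) (auto simp: detour_def)
      next
        case 2
        then show ?thesis
          using x ij by (intro image_eqI[where x="j + i + 2 - x"]) (auto simp: detour_def)
      next
        case 3
        then show ?thesis using x ij by (intro image_eqI[where x="Suc x"]) (auto simp: detour_def)
      qed
    qed
  qed
qed

lemma path_in_extend:
  assumes p: "path_in N E p L" and w: "w < N" "w \<notin> p ` {..<L}"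
    and q_image: "q ` {..<Suc L} = insert w (p ` {..<L})"
    and q_edges: "\<And>t. Suc t < Suc L \<Longrightarrow> E (q t) (q (Suc t))"
  shows "path_in N E q (Suc L)"
proof -
  have "inj_on p {..<L}" using p unfolding path_in_def by auto
  then have "card (q ` {..<Suc L}) = card {..<Suc L}"
    using q_image w by (simp add: card_image)
  then have "inj_on q {..<Suc L}" using inj_on_iff_eq_card by blast
  moreover have "q ` {..<Suc L} \<subseteq> {..<N}" using q_image w(1) p unfolding path_in_def by auto
  ultimately show ?thesis unfolding path_in_def using q_edges by blast
qed

lemma path_in_detour_insert:
  assumes p: "path_in N E p L" and i: "i < L" and w: "w < N" "w \<notin> p ` {..<L}"
    and e1: "E (p i) w" and e2: "Suc i < L \<Longrightarrow> E w (p (Suc i))"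
  shows "path_in N E (detour p w i i) (Suc L)"
proof (rule path_in_extend[OF p w detour_image[OF order_refl i]])
  fix t assume t: "Suc t < Suc L"
  have pE: "\<And>t. Suc t < L \<Longrightarrow> E (p t) (p (Suc t))" using p unfolding path_in_def by auto
  consider "Suc t \<le> i" | "t = i" | "t = Suc i" | "Suc i < t" by linarith
  then show "E (detour p w i i t) (detour p w i i (Suc t))"
  proof cases
    case 1 then show ?thesis using pE i unfolding detour_def by simp
  next
    case 2 then show ?thesis using e1 unfolding detour_def by simp
  next
    case 3 then show ?thesis using e2 t unfolding detour_def by simp
  next
    case 4 then show ?thesis using pE[of "t - 1"] t unfolding detour_def by simp
  qed
qed

lemma path_in_detour_reverse:
  assumes sg: "simple_graph N E" and p: "path_in N E p L" and ij: "i < j" "Suc j < L"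
    and w: "w < N" "w \<notin> p ` {..<L}"
    and e1: "E (p i) w" and e2: "E w (p j)" and e3: "E (p (Suc i)) (p (Suc j))"
  shows "path_in N E (detour p w i j) (Suc L)"
proof (rule path_in_extend[OF p w detour_image])
  show "i \<le> j" "j < L" using ij by simp_all
  fix t assume t: "Suc t < Suc L"
  have pE: "\<And>t. Suc t < L \<Longrightarrow> E (p t) (p (Suc t))" using p unfolding path_in_def by auto
  consider "Suc t \<le> i" | "t = i" | "t = Suc i" | "Suc i < t" "t \<le> j" | "t = Suc j" | "Suc j < t"
    by linarith
  then show "E (detour p w i j t) (detour p w i j (Suc t))"
  proof cases
    case 1 then show ?thesis using pE ij unfolding detour_def by simp
  next
    case 2 then show ?thesis using e1 unfolding detour_def by simp
  next
    case 3 then show ?thesis using e2 ij unfolding detour_def by simp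
  next
    case 4
    define x where "x = j + i + 1 - t"
    have x: "Suc x < L" "j + i + 2 - t = Suc x" "j + i + 2 - Suc t = x"
      using 4 ij unfolding x_def by linarith+
    have "E (p (Suc x)) (p x)"
      using simple_graph_sym[OF sg path_in_less[OF p] path_in_less[OF p] pE] x(1) by simp
    then show ?thesis using 4 x unfolding detour_def by simp
  next
    case 5 then show ?thesis using e3 ij unfolding detour_def by simp
  next
    case 6 then show ?thesis using pE[of "t - 1"] t ij unfolding detour_def by simp
  qed
qed

lemma longest_path_exists: "\<exists>p L. longest_path N E p L"
proof -
  define Ls where "Ls = {L. \<exists>q. path_in N E q L}"
  have "Ls \<subseteq> {..N}" unfolding Ls_def using path_in_length_le by blast
  then have fin: "finite Ls" by (rule finite_subset) simp
  have "0 \<in> Ls" unfolding Ls_def path_in_def by simp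
  then have "Max Ls \<in> Ls" using fin Max_in by blast
  then obtain p where "path_in N E p (Max Ls)" unfolding Ls_def by blast
  moreover have "\<forall>q L'. path_in N E q L' \<longrightarrow> L' \<le> Max Ls"
    using fin unfolding Ls_def by (auto intro: Max_ge)
  ultimately show ?thesis unfolding longest_path_def by blast
qed

lemma longest_path_neighbour_successor:
  assumes sg: "simple_graph N E" and lp: "longest_path N E p L"
    and w: "w < N" "w \<notin> p ` {..<L}" and i: "i < L" and e: "E w (p i)"
  shows "Suc i < L \<and> \<not> E w (p (Suc i))"
proof (rule ccontr)
  assume c: "\<not> (Suc i < L \<and> \<not> E w (p (Suc i)))"
  have p: "path_in N E p L" using lp unfolding longest_path_def by blast
  have "E (p i) w" using simple_graph_sym[OF sg w(1) path_in_less[OF p i] e] .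
  from path_in_detour_insert[OF p i w this] c have "Suc L \<le> L"
    using lp unfolding longest_path_def by blast
  then show False by simp
qed

lemma longest_path_neighbour_successors_nonadjacent:
  assumes sg: "simple_graph N E" and lp: "longest_path N E p L"
    and w: "w < N" "w \<notin> p ` {..<L}" and ij: "i < j" "j < L"
    and ei: "E w (p i)" and ej: "E w (p j)"
  shows "\<not> E (p (Suc i)) (p (Suc j))"
proof
  assume e3: "E (p (Suc i)) (p (Suc j))"
  have p: "path_in N E p L" using lp unfolding longest_path_def by blast
  have "Suc j < L" using longest_path_neighbour_successor[OF sg lp w ij(2) ej] by blast
  moreover have "E (p i) w" using simple_graph_sym[OF sg w(1) path_in_less[OF p] ei] ij by simp
  ultimately have "Suc L \<le> L"
    using path_in_detour_reverse[OF sg p ij(1) _ w _ ej e3] lp unfolding longest_path_def by blast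
  then show False by simp
qed

lemma longest_path_neighbour_successors_independent:
  assumes sg: "simple_graph N E" and lp: "longest_path N E p L"
    and w: "w < N" "w \<notin> p ` {..<L}"
  shows "independent_set E (insert w ((\<lambda>i. p (Suc i)) ` {i. i < L \<and> E w (p i)}))"
  unfolding independent_set_def
proof (intro ballI impI)
  define D where "D = {i. i < L \<and> E w (p i)}"
  have succ: "Suc i < L" "\<not> E w (p (Suc i))" if "i \<in> D" for i
    using longest_path_neighbour_successor[OF sg lp w] that unfolding D_def by blast+
  have pN: "p (Suc i) < N" if "i \<in> D" for i
    using lp succ(1)[OF that] unfolding longest_path_def by (blast intro: path_in_less)
  fix x y assume x: "x \<in> insert w ((\<lambda>i. p (Suc i)) ` D)" and y: "y \<in> insert w ((\<lambda>i. p (Suc i)) ` D)"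
    and xy: "x \<noteq> y"
  show "\<not> E x y"
  proof (cases "x = w \<or> y = w")
    case True
    then show ?thesis using x y xy succ(2) simple_graph_sym[OF sg pN w(1)] by auto
  next
    case False
    then obtain i j where i: "i \<in> D" "x = p (Suc i)" and j: "j \<in> D" "y = p (Suc j)"
      using x y by auto
    then have "i < j \<or> j < i" using xy by (metis linorder_neqE_nat)
    then show ?thesis
      using longest_path_neighbour_successors_nonadjacent[OF sg lp w] i j
        simple_graph_sym[OF sg pN pN] unfolding D_def by blast
  qed
qed

lemma longest_path_independent_set:
  assumes sg: "simple_graph N E" and lp: "longest_path N E p L"
    and w: "w < N" "w \<notin> p ` {..<L}"
  shows "\<exists>I. I \<subseteq> {..<N} \<and> card I = Suc (card {i. i < L \<and> E w (p i)}) \<and> independent_set E I"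
proof (intro exI conjI)
  define D where "D = {i. i < L \<and> E w (p i)}"
  have p: "path_in N E p L" using lp unfolding longest_path_def by blast
  have succ: "Suc i < L" if "i \<in> D" for i
    using longest_path_neighbour_successor[OF sg lp w] that unfolding D_def by blast
  show "insert w ((\<lambda>i. p (Suc i)) ` D) \<subseteq> {..<N}"
    using w(1) path_in_less[OF p] succ by auto
  have "inj_on (\<lambda>i. p (Suc i)) D"
    using p succ unfolding path_in_def inj_on_def by (metis lessThan_iff nat.inject)
  moreover have "w \<notin> (\<lambda>i. p (Suc i)) ` D" using w(2) succ by auto
  moreover have "finite D" unfolding D_def by simp
  ultimately show "card (insert w ((\<lambda>i. p (Suc i)) ` D)) = Suc (card D)" by (simp add: card_image)
  show "independent_set E (insert w ((\<lambda>i. p (Suc i)) ` D))"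
    unfolding D_def by (rule longest_path_neighbour_successors_independent[OF sg lp w])
qed

lemma contains_anticomplete_pair_mono:
  assumes "contains_anticomplete_pair N E a b" "a' \<le> a" "b' \<le> b"
  shows "contains_anticomplete_pair N E a' b'"
proof -
  obtain A B where "A \<subseteq> {..<N}" "B \<subseteq> {..<N}" "A \<inter> B = {}" "a \<le> card A" "b \<le> card B"
    "anticomplete E A B"
    using assms(1) unfolding contains_anticomplete_pair_def by blast
  then show ?thesis
    unfolding contains_anticomplete_pair_def using assms(2,3) by (intro exI[of _ A] exI[of _ B]) simp
qed

lemma independent_set_anticomplete_pair:
  assumes I: "I \<subseteq> {..<N}" "independent_set E I" and ab: "a + b \<le> card I"
  shows "contains_anticomplete_pair N E a b"
proof -
  have "a \<le> card I" using ab by simp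
  then obtain A where A: "A \<subseteq> I" "card A = a" "finite A"
    by (rule obtain_subset_with_card_n)
  have "finite I" using I(1) by (rule finite_subset) simp
  then have "b \<le> card (I - A)" using A ab by (simp add: card_Diff_subset)
  moreover have "anticomplete E A (I - A)"
    unfolding anticomplete_def
  proof (intro ballI)
    fix x y assume "x \<in> A" "y \<in> I - A"
    then have "x \<in> I" "y \<in> I" "x \<noteq> y" using A(1) by auto
    then show "\<not> E x y \<and> \<not> E y x" using I(2) unfolding independent_set_def by metis
  qed
  moreover have "A \<subseteq> {..<N}" "I - A \<subseteq> {..<N}" "A \<inter> (I - A) = {}" using A(1) I(1) by auto
  ultimately show ?thesis
    unfolding contains_anticomplete_pair_def using A(2) by (intro exI[of _ A] exI[of _ "I - A"]) simp
qed

lemma sparse_attachment_anticomplete_pair: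
  assumes sg: "simple_graph N E" and p: "path_in N E p L"
    and A: "A \<subseteq> {..<N} - p ` {..<L}"
    and sparse: "\<And>a. a \<in> A \<Longrightarrow> card {i. i < L \<and> E a (p i)} \<le> d"
  shows "contains_anticomplete_pair N E (card A) (L - card A * d)"
proof -
  define Seen where "Seen = (\<Union>a\<in>A. {i. i < L \<and> E a (p i)})"
  have "finite A" using A by (rule finite_subset) simp
  then have "card Seen \<le> (\<Sum>a\<in>A. card {i. i < L \<and> E a (p i)})"
    unfolding Seen_def by (rule card_UN_le)
  also have "\<dots> \<le> card A * d"
    using sum_bounded_above[of A "\<lambda>a. card {i. i < L \<and> E a (p i)}" d] sparse by simp
  finally have "card Seen \<le> card A * d" .
  moreover have "Seen \<subseteq> {..<L}" unfolding Seen_def by auto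
  ultimately have unseen: "L - card A * d \<le> card ({..<L} - Seen)"
    by (simp add: card_Diff_subset finite_subset)
  have "inj_on p ({..<L} - Seen)" using p unfolding path_in_def by (auto intro: inj_on_subset)
  then have "card (p ` ({..<L} - Seen)) = card ({..<L} - Seen)" by (rule card_image)
  moreover have "anticomplete E A (p ` ({..<L} - Seen))"
    unfolding anticomplete_def
  proof (intro ballI)
    fix a b assume a: "a \<in> A" and "b \<in> p ` ({..<L} - Seen)"
    then obtain i where i: "i < L" "i \<notin> Seen" "b = p i" by blast
    then have "\<not> E a b" using a unfolding Seen_def by blast
    moreover have "a < N" "b < N" using a A path_in_less[OF p i(1)] i(3) by auto
    ultimately show "\<not> E a b \<and> \<not> E b a" using simple_graph_sym[OF sg] by blast
  qed
  moreover have "p ` ({..<L} - Seen) \<subseteq> {..<N}" using path_in_less[OF p] by auto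
  ultimately show ?thesis
    unfolding contains_anticomplete_pair_def using A unseen
    by (intro exI[of _ A] exI[of _ "p ` ({..<L} - Seen)"]) auto
qed

lemma longest_path_anticomplete_pair:
  assumes sg: "simple_graph N E" and lp: "longest_path N E p L"
    and room: "L + k \<le> N" and long: "2*k*k + 1 \<le> L"
  shows "contains_anticomplete_pair N E k (Suc k)"
proof (cases "\<exists>w\<in>{..<N} - p ` {..<L}. 2*k \<le> card {i. i < L \<and> E w (p i)}")
  case True
  then obtain w where w: "w < N" "w \<notin> p ` {..<L}" and many: "2*k \<le> card {i. i < L \<and> E w (p i)}"
    by blast
  obtain I where "I \<subseteq> {..<N}" "independent_set E I" "card I = Suc (card {i. i < L \<and> E w (p i)})"
    using longest_path_independent_set[OF sg lp w] by blast
  then show ?thesis using many by (intro independent_set_anticomplete_pair) auto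
next
  case False
  have p: "path_in N E p L" using lp unfolding longest_path_def by blast
  have "card ({..<N} - p ` {..<L}) = N - L"
    using p unfolding path_in_def by (simp add: card_Diff_subset card_image)
  then have "k \<le> card ({..<N} - p ` {..<L})" using room by simp
  then obtain A where A: "A \<subseteq> {..<N} - p ` {..<L}" "card A = k"
    by (meson obtain_subset_with_card_n)
  have "card {i. i < L \<and> E a (p i)} \<le> 2*k - 1" if "a \<in> A" for a
  proof -
    have "\<not> 2*k \<le> card {i. i < L \<and> E a (p i)}" using False A(1) that by blast
    then show ?thesis by linarith
  qed
  then have "contains_anticomplete_pair N E (card A) (L - card A * (2*k - 1))"
    by (rule sparse_attachment_anticomplete_pair[OF sg p A(1)])
  then have "contains_anticomplete_pair N E k (L - k * (2*k - 1))" using A(2) by simp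
  moreover have "k * (2*k - 1) + k = 2*k*k" by (cases k) (simp_all add: algebra_simps)
  ultimately show ?thesis
    using long by (elim contains_anticomplete_pair_mono) linarith+
qed

text \<open>A state of depth-first search: S holds the finished vertices, the stack T (top first)
  is a path, and U holds the unvisited vertices; no finished vertex has an unvisited
  neighbour.\<close>
definition dfs_state :: "nat \<Rightarrow> (nat \<Rightarrow> nat \<Rightarrow> bool) \<Rightarrow> nat set \<Rightarrow> nat list \<Rightarrow> nat set \<Rightarrow> bool" where
  "dfs_state N E S T U \<longleftrightarrow> S \<inter> set T = {} \<and> S \<inter> U = {} \<and> set T \<inter> U = {} \<and> S \<union> set T \<union> U = {..<N}
     \<and> distinct T \<and> (\<forall>i. Suc i < length T \<longrightarrow> E (T!i) (T!Suc i)) \<and> (\<forall>x\<in>S. \<forall>y\<in>U. \<not> E x y)"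

lemma dfs_state_finite: "dfs_state N E S T U \<Longrightarrow> finite S \<and> finite U"
  unfolding dfs_state_def by (metis finite_Un finite_lessThan)

lemma dfs_step:
  assumes sg: "simple_graph N E" and st: "dfs_state N E S T U" and ne: "set T \<union> U \<noteq> {}"
  shows "\<exists>S' T' U'. dfs_state N E S' T' U' \<and> 2 * card U' + length T' < 2 * card U + length T
           \<and> card S' \<le> Suc (card S)"
proof (cases T)
  case Nil
  then obtain u where u: "u \<in> U" using ne by auto
  have "dfs_state N E S [u] (U - {u})" using st Nil u unfolding dfs_state_def by auto
  moreover have "card (U - {u}) < card U" using dfs_state_finite[OF st] u by (intro card_Diff1_less) auto
  ultimately show ?thesis using Nil by (intro exI[of _ S] exI[of _ "[u]"] exI[of _ "U - {u}"]) simp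
next
  case (Cons t T')
  have tN: "t < N" using st Cons unfolding dfs_state_def by auto
  show ?thesis
  proof (cases "\<exists>u\<in>U. E t u")
    case True
    then obtain u where u: "u \<in> U" "E t u" by blast
    have "u < N" using st u(1) unfolding dfs_state_def by auto
    have "E u t" using simple_graph_sym[OF sg tN \<open>u < N\<close> u(2)] .
    have "E ((u # T)!i) ((u # T)!Suc i)" if i: "Suc i < length (u # T)" for i
    proof (cases i)
      case 0 then show ?thesis using \<open>E u t\<close> Cons by simp
    next
      case (Suc i') then show ?thesis using st i unfolding dfs_state_def by simp
    qed
    then have "dfs_state N E S (u # T) (U - {u})" using st u(1) unfolding dfs_state_def by auto
    moreover have "card (U - {u}) < card U" using dfs_state_finite[OF st] u by (intro card_Diff1_less) auto
    ultimately show ?thesis by (intro exI[of _ S] exI[of _ "u # T"] exI[of _ "U - {u}"]) simp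
  next
    case False
    have "\<forall>i. Suc i < length T' \<longrightarrow> E (T'!i) (T'!Suc i)"
      using st Cons unfolding dfs_state_def by (metis Suc_less_eq length_Cons nth_Cons_Suc)
    then have "dfs_state N E (insert t S) T' U" using st Cons False unfolding dfs_state_def by auto
    moreover have "card (insert t S) \<le> Suc (card S)" by (simp add: card_insert_le_m1)
    ultimately show ?thesis using Cons by (intro exI[of _ "insert t S"] exI[of _ T'] exI[of _ U]) simp
  qed
qed

lemma dfs_reaches_finished_count:
  assumes sg: "simple_graph N E" and a: "a \<le> N"
  shows "dfs_state N E S T U \<Longrightarrow> card S \<le> a \<Longrightarrow> \<exists>S' T' U'. dfs_state N E S' T' U' \<and> card S' = a"
proof (induction "2 * card U + length T" arbitrary: S T U rule: less_induct)
  case less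
  show ?case
  proof (cases "card S = a")
    case True then show ?thesis using less.prems(1) by blast
  next
    case False
    have "set T \<union> U \<noteq> {}"
    proof
      assume "set T \<union> U = {}"
      then have "S = {..<N}" using less.prems(1) unfolding dfs_state_def by auto
      then show False using False less.prems(2) a by simp
    qed
    then obtain S' T' U' where "dfs_state N E S' T' U'" "2 * card U' + length T' < 2 * card U + length T"
      "card S' \<le> Suc (card S)"
      using dfs_step[OF sg less.prems(1)] by blast
    then show ?thesis using less.hyps False less.prems(2) by (metis Suc_leI le_neq_implies_less order_trans)
  qed
qed

lemma no_path_anticomplete_pair:
  assumes sg: "simple_graph N E" and a: "a \<le> N" and no_path: "\<And>p. \<not> path_in N E p l"
  shows "contains_anticomplete_pair N E a (N + 1 - a - l)"
proof -
  have "dfs_state N E {} [] {..<N}" unfolding dfs_state_def by simp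
  then obtain S T U where st: "dfs_state N E S T U" and cS: "card S = a"
    using dfs_reaches_finished_count[OF sg a] by force
  have "inj_on (\<lambda>i. T!i) {..<length T}" using st unfolding dfs_state_def by (simp add: inj_on_nth)
  then have T_path: "path_in N E (\<lambda>i. T!i) (length T)"
    using st unfolding dfs_state_def path_in_def by (auto simp: set_conv_nth)
  have "length T < l"
  proof (rule ccontr)
    assume "\<not> length T < l"
    then show False using path_in_prefix[OF T_path, of l] no_path by simp
  qed
  have fin: "finite S" "finite U" using dfs_state_finite[OF st] by auto
  have "N = card (S \<union> set T \<union> U)" using st unfolding dfs_state_def by simp
  also have "\<dots> = card (S \<union> set T) + card U"
    using st fin unfolding dfs_state_def by (intro card_Un_disjoint) auto
  also have "card (S \<union> set T) = card S + length T"
    using st fin unfolding dfs_state_def by (simp add: card_Un_disjoint distinct_card)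
  finally have "N + 1 - a - l \<le> card U" using cS \<open>length T < l\<close> by linarith
  moreover have "anticomplete E S U"
    unfolding anticomplete_def
  proof (intro ballI)
    fix x y assume x: "x \<in> S" and y: "y \<in> U"
    then have "\<not> E x y" using st unfolding dfs_state_def by blast
    moreover have "x < N" "y < N" using st x y unfolding dfs_state_def by auto
    ultimately show "\<not> E x y \<and> \<not> E y x" using simple_graph_sym[OF sg] by blast
  qed
  moreover have "S \<subseteq> {..<N}" "U \<subseteq> {..<N}" "S \<inter> U = {}" using st unfolding dfs_state_def by auto
  ultimately show ?thesis
    unfolding contains_anticomplete_pair_def using cS by (intro exI[of _ S] exI[of _ U]) simp
qed

lemma anticomplete_pair_contains_bipartite:
  assumes pair: "contains_anticomplete_pair N E a b"
    and proper: "\<And>u v. u < h \<Longrightarrow> v < h \<Longrightarrow> H u v \<Longrightarrow> c u \<noteq> c v"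
    and ca: "card {v. v < h \<and> c v} \<le> a" and cb: "card {v. v < h \<and> \<not> c v} \<le> b"
  shows "contains_subgraph N (complement_edges E) h H"
proof -
  obtain A B where AB: "A \<subseteq> {..<N}" "B \<subseteq> {..<N}" "A \<inter> B = {}" "a \<le> card A" "b \<le> card B"
    and anti: "anticomplete E A B"
    using pair unfolding contains_anticomplete_pair_def by blast
  have "finite A" using AB(1) by (rule finite_subset) simp
  then obtain f where f: "f ` {v. v < h \<and> c v} \<subseteq> A" "inj_on f {v. v < h \<and> c v}"
    using card_le_inj[of "{v. v < h \<and> c v}" A] ca AB(4) by fastforce
  have "finite B" using AB(2) by (rule finite_subset) simp
  then obtain g where g: "g ` {v. v < h \<and> \<not> c v} \<subseteq> B" "inj_on g {v. v < h \<and> \<not> c v}"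
    using card_le_inj[of "{v. v < h \<and> \<not> c v}" B] cb AB(5) by fastforce
  define e where "e v = (if c v then f v else g v)" for v
  have eA: "e v \<in> A" if "v < h" "c v" for v using f(1) that unfolding e_def by auto
  have eB: "e v \<in> B" if "v < h" "\<not> c v" for v using g(1) that unfolding e_def by auto
  have "inj_on e {0..<h}"
  proof (rule inj_onI)
    fix u v assume u: "u \<in> {0..<h}" and v: "v \<in> {0..<h}" and euv: "e u = e v"
    show "u = v"
    proof (cases "c u = c v")
      case True
      then show ?thesis
        using euv u v f(2) g(2) unfolding e_def inj_on_def by (cases "c u") auto
    next
      case False
      then have "e u \<in> A \<and> e v \<in> B \<or> e u \<in> B \<and> e v \<in> A" using eA eB u v by (cases "c u") auto
      then show ?thesis using euv AB(3) by auto
    qed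
  qed
  moreover have "e ` {0..<h} \<subseteq> {0..<N}"
    using eA eB AB(1,2) by (force simp: subset_iff)
  moreover have "complement_edges E (e u) (e v)" if "u < h" "v < h" "H u v" for u v
  proof -
    have "e u \<in> A \<and> e v \<in> B \<or> e u \<in> B \<and> e v \<in> A"
      using proper[OF that] eA eB that(1,2) by (cases "c u") auto
    then show ?thesis
      using anti AB(3) unfolding anticomplete_def complement_edges_def by auto
  qed
  ultimately show ?thesis unfolding contains_subgraph_def by blast
qed

text \<open>The hub sees only cycle vertices whose index is divisible by the even number s.\<close>
lemma jahangir_edges_bipartite:
  assumes s: "even s" and uv: "u \<le> s*m" "v \<le> s*m" and e: "jahangir_edges s m u v"
  shows "(u < s*m \<and> even u) \<noteq> (v < s*m \<and> even v)"
proof -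
  have sm: "even (s*m)" using s by simp
  have cycle_step: "(x < s*m \<and> even x) \<noteq> (y < s*m \<and> even y)"
    if "x < s*m" "y = Suc x mod (s*m)" for x y
  proof (cases "Suc x < s*m")
    case True then show ?thesis using that by simp
  next
    case False
    then have "Suc x = s*m" using that(1) by simp
    then have "odd x" "y = 0" using sm that(2) by (metis even_Suc, simp)
    moreover have "0 < s*m" using that(1) by linarith
    ultimately show ?thesis by simp
  qed
  have hub: "even x" if "s dvd x" for x using s that by (auto dest: dvd_trans)
  from e consider "u < s*m" "v = Suc u mod (s*m)" | "v < s*m" "u = Suc v mod (s*m)"
    | "u = s*m" "v < s*m" "s dvd v" | "v = s*m" "u < s*m" "s dvd u"
    unfolding jahangir_edges_def by auto
  then show ?thesis
  proof cases
    case 1 then show ?thesis using cycle_step by blast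
  next
    case 2 then show ?thesis using cycle_step by metis
  next
    case 3 then show ?thesis using hub by auto
  next
    case 4 then show ?thesis using hub by auto
  qed
qed

lemma card_even_below_double: "card {v. v < 2*k \<and> even v} = (k::nat)"
proof -
  have "{v. v < 2*k \<and> even v} = (\<lambda>i. 2*i) ` {..<k}" by (auto elim!: evenE)
  then show ?thesis by (simp add: card_image inj_on_def)
qed

lemma jahangir_colour_classes:
  assumes "s*m = 2*k"
  shows "card {v. v < s*m + 1 \<and> (v < s*m \<and> even v)} = k"
    and "card {v. v < s*m + 1 \<and> \<not> (v < s*m \<and> even v)} = Suc k"
proof -
  have "{v. v < s*m + 1 \<and> (v < s*m \<and> even v)} = {v. v < 2*k \<and> even v}" using assms by auto
  then show k: "card {v. v < s*m + 1 \<and> (v < s*m \<and> even v)} = k" by (simp add: card_even_below_double)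
  have "{v. v < s*m + 1 \<and> \<not> (v < s*m \<and> even v)} = {..<s*m + 1} - {v. v < s*m + 1 \<and> (v < s*m \<and> even v)}"
    by auto
  then show "card {v. v < s*m + 1 \<and> \<not> (v < s*m \<and> even v)} = Suc k"
    using k assms by (simp add: card_Diff_subset subset_iff)
qed

lemma jahangir_in_complement:
  assumes "even s" "s*m = 2*k" "contains_anticomplete_pair N E k (Suc k)"
  shows "contains_subgraph N (complement_edges E) (s*m + 1) (jahangir_edges s m)"
proof (rule anticomplete_pair_contains_bipartite[OF assms(3)])
  show "(u < s*m \<and> even u) \<noteq> (v < s*m \<and> even v)"
    if "u < s*m + 1" "v < s*m + 1" "jahangir_edges s m u v" for u v
    using jahangir_edges_bipartite[OF assms(1), where u=u and v=v and m=m] that by simp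
qed (use jahangir_colour_classes[OF assms(2)] in simp_all)

lemma path_or_anticomplete_pair:
  assumes sg: "simple_graph N E" and N: "N = n + k - 1" and big: "2*k*k + k + 2 \<le> n"
  shows "contains_subgraph N E n path_edges \<or> contains_anticomplete_pair N E k (Suc k)"
proof -
  obtain p L where lp: "longest_path N E p L" using longest_path_exists by blast
  consider "n \<le> L" | "n - k - 1 \<le> L" "L < n" | "L < n - k - 1" by linarith
  then show ?thesis
  proof cases
    case 1
    then show ?thesis using path_in_contains_path[OF sg] lp unfolding longest_path_def by blast
  next
    case 2
    then have "contains_anticomplete_pair N E k (Suc k)"
      using N big by (intro longest_path_anticomplete_pair[OF sg lp]) linarith+
    then show ?thesis ..
  next
    case 3
    then have "\<not> path_in N E q (n - k - 1)" for q using lp unfolding longest_path_def by fastforce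
    then have "contains_anticomplete_pair N E k (N + 1 - k - (n - k - 1))"
      using N big by (intro no_path_anticomplete_pair[OF sg]) auto
    moreover have "N + 1 - k - (n - k - 1) = Suc k" using N big by linarith
    ultimately show ?thesis by simp
  qed
qed

lemma threshold_exceeds_quadratic:
  assumes "3 \<le> (k::nat)"
  shows "2*k*k + k + 2 \<le> (4*k - 1) * (k - 1) + 1"
proof -
  obtain j where "k = j + 3" using assms le_Suc_ex by (metis add.commute)
  then show ?thesis by (simp add: algebra_simps)
qed

definition two_cliques :: "nat \<Rightarrow> nat \<Rightarrow> nat \<Rightarrow> bool" where
  "two_cliques c u v \<longleftrightarrow> u \<noteq> v \<and> (u < c \<longleftrightarrow> v < c)"

lemma simple_graph_two_cliques: "simple_graph N (two_cliques c)"
  unfolding simple_graph_def two_cliques_def by auto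

lemma walk_stays_on_side:
  assumes step: "\<And>i. Suc i < l \<Longrightarrow> Q (f i) \<longleftrightarrow> Q (f (Suc i))" and "i < l"
  shows "Q (f i) \<longleftrightarrow> Q (f 0)"
  using \<open>i < l\<close> by (induction i) (use step in auto)

lemma walk_alternates_sides:
  assumes step: "\<And>i. Suc i < l \<Longrightarrow> Q (f i) \<longleftrightarrow> \<not> Q (f (Suc i))" and "i < l"
  shows "Q (f i) \<longleftrightarrow> (Q (f 0) \<longleftrightarrow> even i)"
  using \<open>i < l\<close> by (induction i) (use step in auto)

lemma two_cliques_no_long_path:
  assumes "c < n" "N - c < n"
  shows "\<not> contains_subgraph N (two_cliques c) n path_edges"
proof
  assume "contains_subgraph N (two_cliques c) n path_edges"
  then obtain f where inj: "inj_on f {0..<n}" and range: "f ` {0..<n} \<subseteq> {0..<N}"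
    and edges: "\<forall>u<n. \<forall>v<n. path_edges u v \<longrightarrow> two_cliques c (f u) (f v)"
    unfolding contains_subgraph_def by blast
  have "f i < c \<longleftrightarrow> f (Suc i) < c" if "Suc i < n" for i
    using edges that unfolding path_edges_def two_cliques_def by auto
  then have side: "f i < c \<longleftrightarrow> f 0 < c" if "i < n" for i
    using walk_stays_on_side[where Q = "\<lambda>x. x < c"] that by blast
  have "f ` {0..<n} \<subseteq> (if f 0 < c then {0..<c} else {c..<N})"
  proof (intro image_subsetI)
    fix i assume i: "i \<in> {0..<n}"
    then have "f i < N" using range by (auto simp: image_subset_iff)
    then show "f i \<in> (if f 0 < c then {0..<c} else {c..<N})" using side[of i] i by auto
  qed
  then have "n \<le> card (if f 0 < c then {0..<c} else {c..<N})"
    using card_inj_on_le[OF inj] by simp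
  then have "n \<le> c \<or> n \<le> N - c" by (simp split: if_splits)
  then show False using assms by linarith
qed

lemma two_cliques_complement_no_jahangir:
  assumes sm: "s*m = 2*k" and small: "N - c < k"
  shows "\<not> contains_subgraph N (complement_edges (two_cliques c)) (s*m + 1) (jahangir_edges s m)"
proof
  assume "contains_subgraph N (complement_edges (two_cliques c)) (s*m + 1) (jahangir_edges s m)"
  then obtain g where inj: "inj_on g {0..<s*m + 1}" and range: "g ` {0..<s*m + 1} \<subseteq> {0..<N}"
    and edges: "\<forall>u<s*m + 1. \<forall>v<s*m + 1. jahangir_edges s m u v \<longrightarrow>
                  complement_edges (two_cliques c) (g u) (g v)"
    unfolding contains_subgraph_def by blast
  have "g i < c \<longleftrightarrow> \<not> g (Suc i) < c" if "Suc i < 2*k" for i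
  proof -
    have "jahangir_edges s m i (Suc i)" unfolding jahangir_edges_def sm using that by simp
    then have "complement_edges (two_cliques c) (g i) (g (Suc i))" using edges that sm by simp
    then show ?thesis unfolding complement_edges_def two_cliques_def by auto
  qed
  then have side: "g i < c \<longleftrightarrow> (g 0 < c \<longleftrightarrow> even i)" if "i < 2*k" for i
    using walk_alternates_sides[where Q = "\<lambda>x. x < c"] that by blast
  define pos where "pos i = (if g 0 < c then 2*i + 1 else 2*i)" for i :: nat
  have pos: "pos i < 2*k" "\<not> g (pos i) < c" if "i < k" for i
    using that side[of "pos i"] unfolding pos_def by auto
  have "inj_on (g \<circ> pos) {..<k}"
  proof (rule comp_inj_on)
    show "inj_on pos {..<k}" unfolding pos_def inj_on_def by auto
    show "inj_on g (pos ` {..<k})" by (rule inj_on_subset[OF inj]) (use pos(1) sm in fastforce)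
  qed
  moreover have "(g \<circ> pos) ` {..<k} \<subseteq> {c..<N}"
  proof (intro image_subsetI)
    fix i assume "i \<in> {..<k}"
    then have "pos i < s*m + 1" "\<not> g (pos i) < c" using pos[of i] sm by auto
    then show "(g \<circ> pos) i \<in> {c..<N}" using range by (auto simp: image_subset_iff)
  qed
  ultimately have "card {..<k} \<le> card {c..<N}" using card_inj_on_le by blast
  then show False using small by simp
qed

lemma ramsey_number_eqI:
  assumes upper: "\<And>E. simple_graph N E \<Longrightarrow>
      contains_subgraph N E kG EG \<or> contains_subgraph N (complement_edges E) kH EH"
    and lower: "\<And>N'. N' < N \<Longrightarrow> \<exists>E. simple_graph N' E \<and>
      \<not> contains_subgraph N' E kG EG \<and> \<not> contains_subgraph N' (complement_edges E) kH EH"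
  shows "ramsey_number kG EG kH EH = N"
  unfolding ramsey_number_def
proof (rule Least_equality)
  show "\<forall>E. simple_graph N E \<longrightarrow>
      contains_subgraph N E kG EG \<or> contains_subgraph N (complement_edges E) kH EH"
    using upper by blast
  show "N \<le> N'" if "\<forall>E. simple_graph N' E \<longrightarrow>
      contains_subgraph N' E kG EG \<or> contains_subgraph N' (complement_edges E) kH EH" for N'
    using that lower by (meson not_le)
qed

theorem theorem1:
  fixes s m n :: nat
  assumes "s \<ge> 2" and "even s" and "m \<ge> 3"
    and "n \<ge> (2*s*m - 1) * (s*m div 2 - 1) + 1"
  shows "ramsey_number n path_edges (s*m + 1) (jahangir_edges s m) = n + s*m div 2 - 1"
proof -
  define k where "k = s*m div 2"
  have sm: "s*m = 2*k" unfolding k_def using \<open>even s\<close> by simp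
  have "2*3 \<le> s*m" using assms(1,3) mult_le_mono by blast
  then have k3: "3 \<le> k" using sm by simp
  moreover have "(2*s*m - 1) * (s*m div 2 - 1) + 1 = (4*k - 1) * (k - 1) + 1"
    using sm k_def[symmetric] by (simp add: mult.assoc)
  ultimately have big: "2*k*k + k + 2 \<le> n"
    using threshold_exceeds_quadratic assms(4) by (metis le_trans)
  show ?thesis
    unfolding k_def[symmetric]
  proof (rule ramsey_number_eqI)
    fix E assume "simple_graph (n + k - 1) E"
    then show "contains_subgraph (n + k - 1) E n path_edges \<or>
        contains_subgraph (n + k - 1) (complement_edges E) (s*m + 1) (jahangir_edges s m)"
      using path_or_anticomplete_pair[OF _ refl big] jahangir_in_complement[OF \<open>even s\<close> sm]
      by blast
  next
    fix N assume "N < n + k - 1"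
    then show "\<exists>E. simple_graph N E \<and> \<not> contains_subgraph N E n path_edges \<and>
        \<not> contains_subgraph N (complement_edges E) (s*m + 1) (jahangir_edges s m)"
    proof (intro exI conjI)
      show "simple_graph N (two_cliques (n - 1))" by (rule simple_graph_two_cliques)
      show "\<not> contains_subgraph N (two_cliques (n - 1)) n path_edges"
        using \<open>N < n + k - 1\<close> big by (intro two_cliques_no_long_path) linarith+
      show "\<not> contains_subgraph N (complement_edges (two_cliques (n - 1))) (s*m + 1) (jahangir_edges s m)"
        using \<open>N < n + k - 1\<close> k3 by (intro two_cliques_complement_no_jahangir[OF sm]) linarith
    qed
  qed
qed

end
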